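(* For every graph $G$, $\mathrm{cop}(G^+)\ge \mathrm{cop}(G)$; that is, clique substitution does not decrease the cop number.
   Context: All graphs are finite, undirected, without loops or multiple edges; $N(v)$ is the set of neighbours of $v$. Clique substitution at a vertex $v$ replaces $v$ by a clique of size $|N(v)|$ and adds a perfect matching between the vertices of this clique and $N(v)$. $G^+$ is the graph obtained from $G$ by clique substitution at every vertex: formally $V(G^+)=\bigcup_{v\in V(G)}(\{v\}\times N(v))$, and $(v_1,u_1)$, $(v_2,u_2)$ are adjacent iff $v_1=v_2$, or $v_1=u_2$ and $u_1=v_2$. Cops and Robber game on a connected graph: for an integer $k\ge 1$, the cop player places $k$ cops on (not necessarily distinct) vertices, then the robber is placed on a vertex; then, starting with the cops, the players alternate moves. In a cop move, each cop either stays or moves to an adjacent vertex; in a robber move, the robber stays or moves to an adjacent vertex. The cops win if at some point a cop and the robber occupy the same vertex. Both players have complete information. The cop number $\mathrm{cop}(G)$ of a connected graph $G$ is the smallest $k$ such that the cops have a winning strategy with $k$ cops; for a non-connected graph it is the maximum cop number of its connected components. *)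

theory Defs
  imports Main
begin

definition graph :: "'a set \<Rightarrow> ('a \<Rightarrow> 'a \<Rightarrow> bool) \<Rightarrow> bool" where
  "graph V E \<longleftrightarrow> finite V \<and> (\<forall>x y. E x y \<longrightarrow> x \<in> V \<and> y \<in> V)
     \<and> (\<forall>x y. E x y \<longrightarrow> E y x) \<and> (\<forall>x. \<not> E x x)"

definition nbrs :: "('a \<Rightarrow> 'a \<Rightarrow> bool) \<Rightarrow> 'a \<Rightarrow> 'a set" where
  "nbrs E v = {u. E v u}"

definition plus_V :: "'a set \<Rightarrow> ('a \<Rightarrow> 'a \<Rightarrow> bool) \<Rightarrow> ('a \<times> 'a) set" where
  "plus_V V E = (\<Union>v\<in>V. {v} \<times> nbrs E v)"

definition plus_E :: "'a set \<Rightarrow> ('a \<Rightarrow> 'a \<Rightarrow> bool) \<Rightarrow> ('a \<times> 'a) \<Rightarrow> ('a \<times> 'a) \<Rightarrow> bool" where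
  "plus_E V E p q \<longleftrightarrow> p \<in> plus_V V E \<and> q \<in> plus_V V E \<and> p \<noteq> q \<and>
     (fst p = fst q \<or> (fst p = snd q \<and> snd p = fst q))"

definition reach :: "'a set \<Rightarrow> ('a \<Rightarrow> 'a \<Rightarrow> bool) \<Rightarrow> 'a \<Rightarrow> 'a \<Rightarrow> bool" where
  "reach V E = (\<lambda>x y. E x y \<and> x \<in> V \<and> y \<in> V)\<^sup>*\<^sup>*"

definition components :: "'a set \<Rightarrow> ('a \<Rightarrow> 'a \<Rightarrow> bool) \<Rightarrow> 'a set set" where
  "components V E = (\<lambda>v. {u \<in> V. reach V E v u}) ` V"

definition connected_graph :: "'a set \<Rightarrow> ('a \<Rightarrow> 'a \<Rightarrow> bool) \<Rightarrow> bool" where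
  "connected_graph V E \<longleftrightarrow> V \<noteq> {} \<and> (\<forall>x\<in>V. \<forall>y\<in>V. reach V E x y)"

definition step :: "'a set \<Rightarrow> ('a \<Rightarrow> 'a \<Rightarrow> bool) \<Rightarrow> 'a \<Rightarrow> 'a \<Rightarrow> bool" where
  "step V E x y \<longleftrightarrow> y \<in> V \<and> (y = x \<or> E x y)"

text \<open>A cop configuration for k cops is a list of k (not necessarily distinct) vertices.\<close>
definition cop_step :: "'a set \<Rightarrow> ('a \<Rightarrow> 'a \<Rightarrow> bool) \<Rightarrow> 'a list \<Rightarrow> 'a list \<Rightarrow> bool" where
  "cop_step V E c c' \<longleftrightarrow> length c' = length c \<and> (\<forall>i<length c. step V E (c ! i) (c' ! i))"

text \<open>A legal robber play: r 0 is the initial placement, r (n+1) is the position after the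
  (n+1)-st robber move.\<close>
definition robber_walk :: "'a set \<Rightarrow> ('a \<Rightarrow> 'a \<Rightarrow> bool) \<Rightarrow> (nat \<Rightarrow> 'a) \<Rightarrow> bool" where
  "robber_walk V E r \<longleftrightarrow> r 0 \<in> V \<and> (\<forall>n. step V E (r n) (r (Suc n)))"

text \<open>A cop strategy (with complete information) maps the history of robber positions
  r_0,...,r_{n-1} to the cop configuration c_n (c_0 = initial placement; c_{n+1} is chosen
  after seeing r_n). Since the cops' own past moves are determined by the strategy, this
  is complete information. The cops win if some strategy makes only legal moves and
  captures every legal robber play at some finite time: either after the robber's
  placement/move (r_n on c_n) or after the following cop move (r_n on c_{n+1}).\<close>
definition cops_win :: "'a set \<Rightarrow> ('a \<Rightarrow> 'a \<Rightarrow> bool) \<Rightarrow> nat \<Rightarrow> bool" where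
  "cops_win V E k \<longleftrightarrow> (\<exists>\<sigma> :: 'a list \<Rightarrow> 'a list.
     length (\<sigma> []) = k \<and> set (\<sigma> []) \<subseteq> V \<and>
     (\<forall>r. robber_walk V E r \<longrightarrow>
        (\<forall>n. cop_step V E (\<sigma> (map r [0..<n])) (\<sigma> (map r [0..<Suc n]))) \<and>
        (\<exists>n. r n \<in> set (\<sigma> (map r [0..<n])) \<or> r n \<in> set (\<sigma> (map r [0..<Suc n])))))"

definition cop_number_conn :: "'a set \<Rightarrow> ('a \<Rightarrow> 'a \<Rightarrow> bool) \<Rightarrow> nat" where
  "cop_number_conn V E = (LEAST k. 1 \<le> k \<and> cops_win V E k)"

definition cop_number :: "'a set \<Rightarrow> ('a \<Rightarrow> 'a \<Rightarrow> bool) \<Rightarrow> nat" where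
  "cop_number V E =
     (if connected_graph V E then cop_number_conn V E
      else Max ((\<lambda>C. cop_number_conn C E) ` components V E))"

end

theory Submission
  imports Defs
begin

text \<open>It suffices to bound the cop number of every component K of G by that of G^+.
  An isolated vertex needs one cop. Otherwise the cliques over K form a component D of G^+,
  and a winning strategy on D is transferred to K. The robber's walk on K is shadowed in D
  at double speed: a move from x to y becomes a move inside the clique of x to (x, y),
  followed by the matching edge to (y, x). The cops on K copy the first coordinates of the
  cops on D every second round; two moves in G^+ project to at most one move in G, and a
  capture of the shadow projects to a capture of the robber, provided the cops on D stay
  put after capturing, which any winning strategy can be modified to do.\<close>

lemma reach_edge: "E x y \<Longrightarrow> x \<in> V \<Longrightarrow> y \<in> V \<Longrightarrow> reach V E x y"
  unfolding reach_def by auto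

lemma reach_trans: "reach V E x y \<Longrightarrow> reach V E y z \<Longrightarrow> reach V E x z"
  unfolding reach_def by auto

lemma reach_sym: "symp E \<Longrightarrow> reach V E x y \<Longrightarrow> reach V E y x"
  unfolding reach_def by (rule sympD[OF symp_rtranclp]) (auto simp: symp_def)

lemma reach_closed:
  assumes "reach V E x y" "x \<in> S" "\<And>a b. a \<in> S \<Longrightarrow> E a b \<Longrightarrow> b \<in> V \<Longrightarrow> b \<in> S"
  shows "y \<in> S"
  using assms(1) unfolding reach_def
  by (induction rule: rtranclp_induct) (use assms in auto)

lemma graph_symp: "graph V E \<Longrightarrow> symp E"
  unfolding graph_def symp_def by blast

lemma components_subset: "K \<in> components V E \<Longrightarrow> K \<subseteq> V"
  unfolding components_def by auto

lemma components_nonempty: "K \<in> components V E \<Longrightarrow> K \<noteq> {}"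
  unfolding components_def reach_def by auto

lemma components_closed: "K \<in> components V E \<Longrightarrow> x \<in> K \<Longrightarrow> E x y \<Longrightarrow> y \<in> V \<Longrightarrow> y \<in> K"
  unfolding components_def by (auto intro: reach_trans reach_edge)

lemma components_reach:
  assumes "symp E" "K \<in> components V E" "x \<in> K" "y \<in> K"
  shows "reach V E x y"
proof -
  obtain v where "reach V E v x" "reach V E v y"
    using assms(2-4) unfolding components_def by auto
  then show ?thesis using reach_sym[OF assms(1)] reach_trans by metis
qed

lemma closed_connected_in_components:
  assumes "D \<subseteq> V" "d \<in> D"
    and closed: "\<And>a b. a \<in> D \<Longrightarrow> E a b \<Longrightarrow> b \<in> V \<Longrightarrow> b \<in> D"
    and connected: "\<And>x y. x \<in> D \<Longrightarrow> y \<in> D \<Longrightarrow> reach V E x y"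
  shows "D \<in> components V E"
proof -
  have "D = {u \<in> V. reach V E d u}"
    using assms reach_closed[of V E d _ D] by blast
  then show ?thesis using assms(1,2) unfolding components_def by blast
qed

lemma isolated_component:
  assumes "symp E" "K \<in> components V E" "x \<in> K" "\<And>y. \<not> E x y"
  shows "K = {x}"
proof -
  have "y = x" if "y \<in> K" for y
    using components_reach[OF assms(1,2,3) that] assms(4) unfolding reach_def
    by (cases rule: converse_rtranclpE) auto
  then show ?thesis using assms(3) by blast
qed

lemma connected_graph_components: "connected_graph V E \<Longrightarrow> components V E = {V}"
  unfolding connected_graph_def components_def by auto

lemma cop_number_conn_le_cop_number:
  assumes "finite V" "K \<in> components V E"
  shows "cop_number_conn K E \<le> cop_number V E"
proof (cases "connected_graph V E")
  case True
  then show ?thesis using assms(2) by (simp add: cop_number_def connected_graph_components)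
next
  case False
  have "finite (components V E)" using assms(1) unfolding components_def by simp
  then show ?thesis using False assms(2) by (simp add: cop_number_def)
qed

lemma cop_number_attained:
  assumes "finite V" "V \<noteq> {}"
  shows "\<exists>K\<in>components V E. cop_number V E = cop_number_conn K E"
proof (cases "connected_graph V E")
  case True
  then show ?thesis by (simp add: cop_number_def connected_graph_components)
next
  case False
  have "finite (components V E)" "components V E \<noteq> {}"
    using assms unfolding components_def by auto
  then have "Max ((\<lambda>K. cop_number_conn K E) ` components V E)
      \<in> (\<lambda>K. cop_number_conn K E) ` components V E"
    by (simp add: Max_in)
  then show ?thesis using False unfolding cop_number_def by (simp add: image_iff)
qed

lemma cops_win_card: "finite C \<Longrightarrow> cops_win C E (card C)"
proof -
  assume "finite C"
  then obtain xs where xs: "set xs = C" "distinct xs" using finite_distinct_list by blast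
  show ?thesis unfolding cops_win_def
    by (rule exI[of _ "\<lambda>_. xs"])
      (use xs distinct_card[OF xs(2)] in \<open>auto simp: cop_step_def step_def robber_walk_def intro!: exI[of _ 0]\<close>)
qed

lemma cop_number_conn_wins:
  assumes "finite C" "C \<noteq> {}"
  shows "1 \<le> cop_number_conn C E \<and> cops_win C E (cop_number_conn C E)"
  unfolding cop_number_conn_def
  by (rule LeastI[of _ "card C"]) (use assms cops_win_card in \<open>auto simp: Suc_leI card_gt_0_iff\<close>)

lemma cop_number_conn_mono:
  assumes "\<And>k. cops_win D F k \<Longrightarrow> cops_win C E k" "finite D" "D \<noteq> {}"
  shows "cop_number_conn C E \<le> cop_number_conn D F"
  unfolding cop_number_conn_def[of C]
  by (rule Least_le) (use cop_number_conn_wins[OF assms(2,3)] assms(1) in blast)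

lemma cop_number_conn_singleton: "cop_number_conn {x} E \<le> 1"
  unfolding cop_number_conn_def using cops_win_card[of "{x}" E] by (intro Least_le) simp

lemma one_le_cop_number:
  assumes "finite V" "V \<noteq> {}"
  shows "1 \<le> cop_number V E"
proof -
  obtain K where K: "K \<in> components V E" "cop_number V E = cop_number_conn K E"
    using cop_number_attained[OF assms] by blast
  have "finite K" by (rule finite_subset[OF components_subset[OF K(1)] assms(1)])
  then show ?thesis using cop_number_conn_wins[OF _ components_nonempty[OF K(1)]] K(2) by simp
qed


definition play :: "('b list \<Rightarrow> 'b list) \<Rightarrow> (nat \<Rightarrow> 'b) \<Rightarrow> nat \<Rightarrow> 'b list" where
  "play \<sigma> r n = \<sigma> (map r [0..<n])"

lemma cops_win_play:
  "cops_win V E k \<longleftrightarrow> (\<exists>\<sigma>. length (\<sigma> []) = k \<and> set (\<sigma> []) \<subseteq> V \<and>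
     (\<forall>r. robber_walk V E r \<longrightarrow>
        (\<forall>n. cop_step V E (play \<sigma> r n) (play \<sigma> r (Suc n))) \<and>
        (\<exists>n. r n \<in> set (play \<sigma> r n) \<or> r n \<in> set (play \<sigma> r (Suc n)))))"
  unfolding cops_win_def play_def ..

lemma set_play_subset:
  assumes "set (\<sigma> []) \<subseteq> V" "\<And>n. cop_step V E (play \<sigma> r n) (play \<sigma> r (Suc n))"
  shows "set (play \<sigma> r n) \<subseteq> V"
proof (induction n)
  case 0
  then show ?case using assms(1) by (simp add: play_def)
next
  case (Suc n)
  then show ?case using assms(2)[of n] by (auto simp: cop_step_def step_def in_set_conv_nth)
qed

lemma cop_step_refl: "set c \<subseteq> V \<Longrightarrow> cop_step V E c c"
  unfolding cop_step_def step_def by auto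

definition captured_at :: "('b list \<Rightarrow> 'b list) \<Rightarrow> 'b list \<Rightarrow> nat \<Rightarrow> bool" where
  "captured_at \<sigma> h m \<longleftrightarrow>
     m < length h \<and> (h ! m \<in> set (\<sigma> (take m h)) \<or> h ! m \<in> set (\<sigma> (take (Suc m) h)))"

text \<open>freeze \<sigma> plays \<sigma> until the first capture recorded in the history and then keeps
  the capturing configuration.\<close>

definition freeze_time :: "('b list \<Rightarrow> 'b list) \<Rightarrow> 'b list \<Rightarrow> nat" where
  "freeze_time \<sigma> h =
     (if \<exists>m. captured_at \<sigma> h m then
        let m = LEAST m. captured_at \<sigma> h m in if h ! m \<in> set (\<sigma> (take m h)) then m else Suc m
      else length h)"

definition freeze :: "('b list \<Rightarrow> 'b list) \<Rightarrow> 'b list \<Rightarrow> 'b list" where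
  "freeze \<sigma> h = \<sigma> (take (freeze_time \<sigma> h) h)"

lemma play_freeze:
  assumes capt: "r m \<in> set (play \<sigma> r m) \<or> r m \<in> set (play \<sigma> r (Suc m))"
    and first: "\<And>i. i < m \<Longrightarrow> r i \<notin> set (play \<sigma> r i) \<and> r i \<notin> set (play \<sigma> r (Suc i))"
  shows "play (freeze \<sigma>) r n =
    play \<sigma> r (min n (if r m \<in> set (play \<sigma> r m) then m else Suc m))"
proof -
  let ?h = "map r [0..<n]"
  have captured: "captured_at \<sigma> ?h i \<longleftrightarrow>
      i < n \<and> (r i \<in> set (play \<sigma> r i) \<or> r i \<in> set (play \<sigma> r (Suc i)))" for i
    by (auto simp: captured_at_def play_def take_map)
  show ?thesis
  proof (cases "n \<le> m")
    case True
    then have "\<not> captured_at \<sigma> ?h i" for i using captured first by auto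
    then show ?thesis using True by (simp add: play_def freeze_def freeze_time_def)
  next
    case False
    have m: "captured_at \<sigma> ?h m" using captured capt False by simp
    have "(LEAST i. captured_at \<sigma> ?h i) = m"
    proof (rule Least_equality)
      show "m \<le> i" if "captured_at \<sigma> ?h i" for i using that captured first by (meson not_le)
    qed (rule m)
    moreover have "\<exists>i. captured_at \<sigma> ?h i" using m ..
    moreover have "?h ! m = r m" "take m ?h = map r [0..<m]" using False by (simp_all add: take_map)
    ultimately have "freeze_time \<sigma> ?h = (if r m \<in> set (play \<sigma> r m) then m else Suc m)"
      unfolding freeze_time_def by (simp add: play_def)
    then show ?thesis using False by (auto simp: freeze_def play_def take_map min_def le_Suc_eq)
  qed
qed

lemma cops_win_freeze:
  assumes "cops_win V E k"
  shows "\<exists>\<sigma>. length (\<sigma> []) = k \<and> set (\<sigma> []) \<subseteq> V \<and>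
     (\<forall>r. robber_walk V E r \<longrightarrow>
        (\<forall>n. cop_step V E (play \<sigma> r n) (play \<sigma> r (Suc n))) \<and>
        (\<exists>m. r m \<in> set (play \<sigma> r (Suc m)) \<and> (\<forall>t>m. play \<sigma> r t = play \<sigma> r (Suc m))))"
proof -
  obtain \<sigma> where \<sigma>: "length (\<sigma> []) = k" "set (\<sigma> []) \<subseteq> V"
    and win: "\<And>r. robber_walk V E r \<Longrightarrow>
        (\<forall>n. cop_step V E (play \<sigma> r n) (play \<sigma> r (Suc n))) \<and>
        (\<exists>n. r n \<in> set (play \<sigma> r n) \<or> r n \<in> set (play \<sigma> r (Suc n)))"
    using assms unfolding cops_win_play by blast
  have "freeze \<sigma> [] = \<sigma> []" by (simp add: freeze_def freeze_time_def captured_at_def)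
  moreover have "(\<forall>n. cop_step V E (play (freeze \<sigma>) r n) (play (freeze \<sigma>) r (Suc n))) \<and>
      (\<exists>m. r m \<in> set (play (freeze \<sigma>) r (Suc m)) \<and>
         (\<forall>t>m. play (freeze \<sigma>) r t = play (freeze \<sigma>) r (Suc m)))"
    if "robber_walk V E r" for r
  proof -
    have legal: "\<And>n. cop_step V E (play \<sigma> r n) (play \<sigma> r (Suc n))"
      using win[OF that] by blast
    define Cap where "Cap i \<longleftrightarrow> r i \<in> set (play \<sigma> r i) \<or> r i \<in> set (play \<sigma> r (Suc i))" for i
    have "\<exists>i. Cap i" using win[OF that] unfolding Cap_def by blast
    then obtain m where m: "Cap m" "\<And>i. i < m \<Longrightarrow> \<not> Cap i"
      using exists_least_iff[of Cap] by blast
    define L where "L = (if r m \<in> set (play \<sigma> r m) then m else Suc m)"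
    have frozen: "play (freeze \<sigma>) r n = play \<sigma> r (min n L)" for n
      unfolding L_def using m by (intro play_freeze) (auto simp: Cap_def)
    have "cop_step V E (play \<sigma> r (min n L)) (play \<sigma> r (min (Suc n) L))" for n
    proof (cases "n < L")
      case True
      then show ?thesis using legal[of n] by (simp add: min_def)
    next
      case False
      then show ?thesis using cop_step_refl[OF set_play_subset[OF \<sigma>(2) legal]] by (simp add: min_def)
    qed
    moreover have "r m \<in> set (play \<sigma> r (min (Suc m) L))" using m(1) by (auto simp: Cap_def L_def)
    moreover have "min t L = min (Suc m) L" if "m < t" for t using that by (simp add: L_def)
    ultimately show ?thesis unfolding frozen by metis
  qed
  ultimately show ?thesis using \<sigma> by (intro exI[of _ "freeze \<sigma>"]) auto
qed


lemma mem_plus_V [simp]: "p \<in> plus_V V E \<longleftrightarrow> fst p \<in> V \<and> E (fst p) (snd p)"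
  by (cases p) (auto simp: plus_V_def nbrs_def)

lemma finite_plus_V: "graph V E \<Longrightarrow> finite (plus_V V E)"
  by (rule finite_subset[of _ "V \<times> V"]) (auto simp: graph_def)

definition plus_over :: "'a set \<Rightarrow> ('a \<Rightarrow> 'a \<Rightarrow> bool) \<Rightarrow> 'a set \<Rightarrow> ('a \<times> 'a) set" where
  "plus_over V E C = {p \<in> plus_V V E. fst p \<in> C}"

lemma step_plus_overI:
  assumes "p \<in> plus_over V E C" "q \<in> plus_over V E C"
    and "fst p = fst q \<or> (fst p = snd q \<and> snd p = fst q)"
  shows "step (plus_over V E C) (plus_E V E) p q"
  using assms unfolding step_def plus_E_def plus_over_def by auto

lemma step_plus_over_twice:
  assumes "step (plus_over V E C) (plus_E V E) x y" "step (plus_over V E C) (plus_E V E) y z"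
  shows "step C E (fst x) (fst z)"
  using assms unfolding step_def plus_E_def plus_over_def by (cases x, cases y, cases z) auto

lemma cop_step_plus_over_twice:
  assumes "cop_step (plus_over V E C) (plus_E V E) c c'" "cop_step (plus_over V E C) (plus_E V E) c' c''"
  shows "cop_step C E (map fst c) (map fst c'')"
  using assms step_plus_over_twice unfolding cop_step_def by (metis length_map nth_map)

lemma reach_plus_clique:
  assumes "v \<in> V" "E v u" "E v u'"
  shows "reach (plus_V V E) (plus_E V E) (v, u) (v, u')"
proof (cases "u = u'")
  case True
  then show ?thesis by (simp add: reach_def)
next
  case False
  then show ?thesis using assms by (intro reach_edge) (auto simp: plus_E_def)
qed

lemma reach_plus_lift:
  assumes g: "graph V E" and "reach V E v v'" "E v u" "E v' u'"
  shows "reach (plus_V V E) (plus_E V E) (v, u) (v', u')"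
  using assms(2,4) unfolding reach_def[of V E]
proof (induction arbitrary: u' rule: rtranclp_induct)
  case base
  then show ?case using assms(3) g by (intro reach_plus_clique) (auto simp: graph_def)
next
  case (step x y)
  then have xy: "E x y" "E y x" "x \<in> V" "y \<in> V" "x \<noteq> y"
    using g by (auto simp: graph_def)
  have "reach (plus_V V E) (plus_E V E) (v, u) (x, y)" using step.IH xy(1) .
  moreover have "reach (plus_V V E) (plus_E V E) (x, y) (y, x)"
    using xy by (intro reach_edge) (auto simp: plus_E_def)
  moreover have "reach (plus_V V E) (plus_E V E) (y, x) (y, u')"
    using xy step.prems by (intro reach_plus_clique)
  ultimately show ?case using reach_trans by metis
qed

lemma plus_over_in_components:
  assumes g: "graph V E" and K: "K \<in> components V E" and has_nbr: "\<And>x. x \<in> K \<Longrightarrow> \<exists>y. E x y"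
  shows "plus_over V E K \<in> components (plus_V V E) (plus_E V E)"
proof -
  obtain x where x: "x \<in> K" using components_nonempty[OF K] by blast
  obtain y where "E x y" using has_nbr[OF x] by blast
  have EV: "\<And>a b. E a b \<Longrightarrow> b \<in> V" using g by (auto simp: graph_def)
  show ?thesis
  proof (rule closed_connected_in_components)
    show "plus_over V E K \<subseteq> plus_V V E" by (auto simp: plus_over_def)
    show "(x, y) \<in> plus_over V E K"
      using x \<open>E x y\<close> components_subset[OF K] by (auto simp: plus_over_def)
    show "b \<in> plus_over V E K" if "a \<in> plus_over V E K" "plus_E V E a b" for a b
      using that components_closed[OF K, of "fst a" "snd a"] EV
      by (auto simp: plus_over_def plus_E_def)
    show "reach (plus_V V E) (plus_E V E) a b" if "a \<in> plus_over V E K" "b \<in> plus_over V E K" for a b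
      using that reach_plus_lift[OF g components_reach[OF graph_symp[OF g] K]]
      by (cases a, cases b) (auto simp: plus_over_def)
  qed
qed

primrec shadow :: "('a \<Rightarrow> 'a) \<Rightarrow> (nat \<Rightarrow> 'a) \<Rightarrow> nat \<Rightarrow> 'a \<times> 'a" where
  "shadow nb r 0 = (r 0, nb (r 0))"
| "shadow nb r (Suc j) = (if r (Suc j) = r j then shadow nb r j else (r (Suc j), r j))"

text \<open>shadow_walk nb r (2j+1) is the shadow after j robber moves, shadow_walk nb r (2j+2)
  its intermediate position in the clique of r j; nb picks the initial clique vertex.\<close>

definition shadow_walk :: "('a \<Rightarrow> 'a) \<Rightarrow> (nat \<Rightarrow> 'a) \<Rightarrow> nat \<Rightarrow> 'a \<times> 'a" where
  "shadow_walk nb r m =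
     (if odd m \<or> m = 0 then shadow nb r (m div 2)
      else let j = m div 2 - 1 in if r (Suc j) = r j then shadow nb r j else (r j, r (Suc j)))"

lemma shadow_walk_0 [simp]: "shadow_walk nb r 0 = shadow nb r 0"
  by (simp add: shadow_walk_def)

lemma shadow_walk_odd [simp]: "shadow_walk nb r (Suc (2 * j)) = shadow nb r j"
  by (simp add: shadow_walk_def)

lemma shadow_walk_even [simp]:
  "shadow_walk nb r (Suc (Suc (2 * j))) = (if r (Suc j) = r j then shadow nb r j else (r j, r (Suc j)))"
  by (simp add: shadow_walk_def)

lemma nat_parity_cases:
  obtains "m = 0" | j where "m = Suc (2 * j)" | j where "m = Suc (Suc (2 * j))"
  by (metis evenE oddE mult_Suc_right add_2_eq_Suc' not0_implies_Suc plus_1_eq_Suc add.commute)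

lemma fst_shadow [simp]: "fst (shadow nb r j) = r j"
  by (induction j) auto

lemma shadow_cong: "(\<And>i. i \<le> j \<Longrightarrow> r i = r' i) \<Longrightarrow> shadow nb r j = shadow nb r' j"
  by (induction j) auto

lemma shadow_walk_cong:
  assumes "\<And>i. i < n \<Longrightarrow> r i = r' i" "m < 2 * n"
  shows "shadow_walk nb r m = shadow_walk nb r' m"
  using assms by (cases m rule: nat_parity_cases) (auto intro!: shadow_cong)

lemma shadow_robber_walk:
  assumes g: "graph V E" and "C \<subseteq> V" and nb: "\<And>x. x \<in> C \<Longrightarrow> E x (nb x)"
    and r: "robber_walk C E r"
  shows "robber_walk (plus_over V E C) (plus_E V E) (shadow_walk nb r)"
proof -
  let ?D = "plus_over V E C"
  have rC: "r j \<in> C" for j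
    using r by (induction j) (auto simp: robber_walk_def step_def)
  have moved: "r (Suc j) \<noteq> r j \<Longrightarrow> E (r j) (r (Suc j))" for j
    using r by (auto simp: robber_walk_def step_def)
  have E_sym: "E x y \<Longrightarrow> E y x" for x y using graph_symp[OF g] by (simp add: symp_def)
  have in_D: "p \<in> ?D \<longleftrightarrow> fst p \<in> C \<and> E (fst p) (snd p)" for p
    using assms(2) by (auto simp: plus_over_def)
  have shadow_D: "shadow nb r j \<in> ?D" for j
    by (induction j) (use rC nb moved E_sym in \<open>auto simp: in_D\<close>)
  have walk_D: "shadow_walk nb r m \<in> ?D" for m
    by (cases m rule: nat_parity_cases) (use shadow_D rC moved nb in \<open>simp_all add: in_D\<close>)
  have steps: "step ?D (plus_E V E) (shadow_walk nb r m) (shadow_walk nb r (Suc m))" for m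
  proof (cases m rule: nat_parity_cases)
    case 1
    then show ?thesis using walk_D[of 1] shadow_walk_odd[of nb r 0] by (simp add: step_def)
  next
    case (2 j)
    then have "Suc m = Suc (Suc (2 * j))" by simp
    then show ?thesis using 2 walk_D[of m] walk_D[of "Suc m"]
      by (intro step_plus_overI) auto
  next
    case (3 j)
    then have "shadow_walk nb r (Suc m) = shadow nb r (Suc j)"
      using shadow_walk_odd[of nb r "Suc j"] by simp
    then show ?thesis using 3 walk_D[of m] walk_D[of "Suc m"]
      by (intro step_plus_overI) auto
  qed
  show ?thesis unfolding robber_walk_def using steps walk_D[of 0] by simp
qed

definition lift_history :: "('a \<Rightarrow> 'a) \<Rightarrow> 'a list \<Rightarrow> ('a \<times> 'a) list" where
  "lift_history nb h = map (shadow_walk nb (nth h)) [0..<2 * length h]"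

lemma lift_history_map: "lift_history nb (map r [0..<n]) = map (shadow_walk nb r) [0..<2 * n]"
proof -
  have "shadow_walk nb (nth (map r [0..<n])) m = shadow_walk nb r m" if "m < 2 * n" for m
    by (rule shadow_walk_cong) (use that in auto)
  then show ?thesis unfolding lift_history_def by simp
qed


lemma shadow_capture:
  fixes CC :: "nat \<Rightarrow> ('a \<times> 'a) list"
  assumes step: "cop_step (plus_over V E C) (plus_E V E) (CC m) (CC (Suc m))"
    and capt: "shadow_walk nb r m \<in> set (CC (Suc m))"
    and stay: "CC (Suc (Suc m)) = CC (Suc m)"
  shows "\<exists>n. r n \<in> fst ` set (CC (2 * n)) \<or> r n \<in> fst ` set (CC (2 * Suc n))"
proof (cases m rule: nat_parity_cases)
  case 1
  then have "CC (2 * Suc 0) = CC (Suc 0)" using stay by (simp add: numeral_2_eq_2)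
  then have "r 0 \<in> fst ` set (CC (2 * Suc 0))" using capt 1 by force
  then show ?thesis by blast
next
  case (2 j)
  then have "r j \<in> fst ` set (CC (2 * Suc j))" using capt by force
  then show ?thesis by blast
next
  case (3 j)
  show ?thesis
  proof (cases "r (Suc j) = r j")
    case True
    then have "r (Suc j) \<in> fst ` set (CC (2 * Suc (Suc j)))" using 3 capt stay by force
    then show ?thesis by blast
  next
    case False
    then have "shadow_walk nb r m = (r j, r (Suc j))" using 3 by simp
    then obtain i where i: "i < length (CC m)" "CC (Suc m) ! i = (r j, r (Suc j))"
      using capt step by (auto simp: cop_step_def in_set_conv_nth)
    then have "step (plus_over V E C) (plus_E V E) (CC m ! i) (r j, r (Suc j))"
      using step by (auto simp: cop_step_def)
    then have "fst (CC m ! i) = r j \<or> fst (CC m ! i) = r (Suc j)"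
      by (cases "CC m ! i") (auto simp: step_def plus_E_def)
    moreover have "fst (CC m ! i) \<in> fst ` set (CC (2 * Suc j))" using i 3 by simp
    ultimately show ?thesis by (metis mult_2 add_Suc_right)
  qed
qed

lemma cops_win_of_plus_over:
  assumes g: "graph V E" and CV: "C \<subseteq> V" and has_nbr: "\<And>x. x \<in> C \<Longrightarrow> \<exists>y. E x y"
    and win: "cops_win (plus_over V E C) (plus_E V E) k"
  shows "cops_win C E k"
proof -
  let ?D = "plus_over V E C" and ?F = "plus_E V E"
  obtain \<sigma> where \<sigma>: "length (\<sigma> []) = k" "set (\<sigma> []) \<subseteq> ?D"
    and wins: "\<And>R. robber_walk ?D ?F R \<Longrightarrow>
        (\<forall>n. cop_step ?D ?F (play \<sigma> R n) (play \<sigma> R (Suc n))) \<and>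
        (\<exists>m. R m \<in> set (play \<sigma> R (Suc m)) \<and> (\<forall>t>m. play \<sigma> R t = play \<sigma> R (Suc m)))"
    using cops_win_freeze[OF win] by blast
  define nb where "nb x = (SOME y. E x y)" for x
  have nb: "E x (nb x)" if "x \<in> C" for x
    unfolding nb_def using has_nbr[OF that] by (rule someI_ex)
  define \<tau> where "\<tau> h = map fst (\<sigma> (lift_history nb h))" for h
  have play_\<tau>: "play \<tau> r n = map fst (play \<sigma> (shadow_walk nb r) (2 * n))" for r n
    by (simp add: play_def \<tau>_def lift_history_map)
  have "(\<forall>n. cop_step C E (play \<tau> r n) (play \<tau> r (Suc n))) \<and>
      (\<exists>n. r n \<in> set (play \<tau> r n) \<or> r n \<in> set (play \<tau> r (Suc n)))"
    if r: "robber_walk C E r" for r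
  proof -
    let ?R = "shadow_walk nb r"
    have legal: "\<And>n. cop_step ?D ?F (play \<sigma> ?R n) (play \<sigma> ?R (Suc n))"
      and "\<exists>m. ?R m \<in> set (play \<sigma> ?R (Suc m)) \<and> (\<forall>t>m. play \<sigma> ?R t = play \<sigma> ?R (Suc m))"
      using wins[OF shadow_robber_walk[OF g CV nb r]] by auto
    then obtain m where "?R m \<in> set (play \<sigma> ?R (Suc m))"
      "play \<sigma> ?R (Suc (Suc m)) = play \<sigma> ?R (Suc m)" by (metis lessI less_Suc_eq)
    then obtain n where "r n \<in> fst ` set (play \<sigma> ?R (2 * n)) \<or> r n \<in> fst ` set (play \<sigma> ?R (2 * Suc n))"
      using shadow_capture[where CC = "play \<sigma> ?R", OF legal] by blast
    then have "r n \<in> set (play \<tau> r n) \<or> r n \<in> set (play \<tau> r (Suc n))"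
      by (simp add: play_\<tau>)
    moreover have "cop_step C E (play \<tau> r n) (play \<tau> r (Suc n))" for n
      using cop_step_plus_over_twice[OF legal[of "2 * n"] legal[of "Suc (2 * n)"]] by (simp add: play_\<tau>)
    ultimately show ?thesis by blast
  qed
  moreover have "length (\<tau> []) = k" "set (\<tau> []) \<subseteq> C"
    using \<sigma> by (auto simp: \<tau>_def lift_history_def plus_over_def)
  ultimately show ?thesis unfolding cops_win_play by blast
qed

lemma cop_number_conn_component_le_plus:
  assumes g: "graph V E" and "\<exists>x y. E x y" and K: "K \<in> components V E"
  shows "cop_number_conn K E \<le> cop_number (plus_V V E) (plus_E V E)"
proof (cases "\<forall>x\<in>K. \<exists>y. E x y")
  case True
  let ?D = "plus_over V E K"
  have D: "?D \<in> components (plus_V V E) (plus_E V E)"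
    using plus_over_in_components[OF g K] True by blast
  have "finite ?D"
    using finite_plus_V[OF g] components_subset[OF D] by (rule finite_subset[rotated])
  have "cop_number_conn K E \<le> cop_number_conn ?D (plus_E V E)"
    using cops_win_of_plus_over[OF g components_subset[OF K]] True \<open>finite ?D\<close> components_nonempty[OF D]
    by (intro cop_number_conn_mono) auto
  also have "\<dots> \<le> cop_number (plus_V V E) (plus_E V E)"
    by (rule cop_number_conn_le_cop_number[OF finite_plus_V[OF g] D])
  finally show ?thesis .
next
  case False
  then obtain x where "x \<in> K" "\<And>y. \<not> E x y" by blast
  then have "K = {x}" using isolated_component[OF graph_symp[OF g] K] by blast
  then have "cop_number_conn K E \<le> 1" using cop_number_conn_singleton by simp
  also have "1 \<le> cop_number (plus_V V E) (plus_E V E)"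
  proof (rule one_le_cop_number[OF finite_plus_V[OF g]])
    obtain u v where "E u v" using assms(2) by blast
    then have "(u, v) \<in> plus_V V E" using g by (simp add: graph_def)
    then show "plus_V V E \<noteq> {}" by blast
  qed
  finally show ?thesis .
qed

theorem lemma7:
  fixes V :: "'a set" and E :: "'a \<Rightarrow> 'a \<Rightarrow> bool"
  assumes "graph V E"
    and "\<exists>x y. E x y"
  shows "cop_number (plus_V V E) (plus_E V E) \<ge> cop_number V E"
proof -
  have "finite V" "V \<noteq> {}" using assms by (auto simp: graph_def)
  then obtain K where "K \<in> components V E" "cop_number V E = cop_number_conn K E"
    using cop_number_attained by blast
  then show ?thesis using cop_number_conn_component_le_plus[OF assms] by simp
qed

end
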